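(* Let $n_p,n,N$ be positive integers and consider images with $n$ pixels from which $N$ square patches of $n_p$ pixels are extracted with unit stride and periodic boundary conditions (so every pixel belongs to exactly $n_p$ patches and $\sum_{i=1}^N\mathbf{P}_i^T\mathbf{P}_i=n_p\mathbf{I}$), where $\mathbf{P}_i\in\{0,1\}^{n_p\times n}$ is the binary matrix extracting the $i$-th patch. Let $\mathbf{C}_1,\dots,\mathbf{C}_K\in\mathbb{R}^{n_p\times n_p}$ be symmetric positive semi-definite matrices, let $\sigma^2>0$, and for each patch $i$ let $\beta_1^i,\dots,\beta_K^i\ge 0$ with $\sum_{j=1}^K\beta_j^i=1$. Define $$\mathbf{F}_i=\sum_{j=1}^K\beta_j^i\,\mathbf{C}_j(\mathbf{C}_j+\sigma^2\mathbf{I})^{-1},\qquad \mathbf{W}=\frac1{n_p}\sum_{i=1}^N\mathbf{P}_i^T\mathbf{F}_i\mathbf{P}_i.$$ Then $\mathbf{W}$ is symmetric, positive semi-definite, and its maximum eigenvalue is no larger than $1$.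
   Context: $\mathbf{W}$ is the linear map implemented by a patch-based Gaussian-mixture MMSE denoiser with fixed (pre-computed) posterior weights $\beta_j^i$: each noisy patch $\mathbf{P}_i\mathbf{y}$ is estimated as $\mathbf{F}_i\mathbf{P}_i\mathbf{y}$, and the patch estimates are put back in place and averaged. *)

theory Defs
  imports "HOL-Analysis.Analysis"
begin

definition psd_matrix :: "real^'n^'n \<Rightarrow> bool" where
  "psd_matrix A \<longleftrightarrow> transpose A = A \<and> (\<forall>x. 0 \<le> x \<bullet> (A *v x))"

definition is_eigenvalue :: "real^'n^'n \<Rightarrow> real \<Rightarrow> bool" where
  "is_eigenvalue A l \<longleftrightarrow> (\<exists>v. v \<noteq> 0 \<and> A *v v = l *\<^sub>R v)"

definition extraction_matrix :: "real^'n^'p \<Rightarrow> bool" where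
  "extraction_matrix P \<longleftrightarrow>
     (\<forall>u j. P $ u $ j = 0 \<or> P $ u $ j = 1) \<and>
     (\<forall>u. \<exists>!j. P $ u $ j = 1) \<and>
     (\<forall>j. \<forall>u u'. P $ u $ j = 1 \<and> P $ u' $ j = 1 \<longrightarrow> u = u')"

definition gmm_filter :: "('k \<Rightarrow> real) \<Rightarrow> ('k \<Rightarrow> real^'p^'p) \<Rightarrow> real \<Rightarrow> real^'p^'p" where
  "gmm_filter b C s2 = (\<Sum>j\<in>UNIV. b j *\<^sub>R (C j ** matrix_inv (C j + s2 *\<^sub>R mat 1)))"

definition gmm_W :: "('i \<Rightarrow> real^'n^'p) \<Rightarrow> ('i \<Rightarrow> 'k \<Rightarrow> real) \<Rightarrow> ('k \<Rightarrow> real^'p^'p) \<Rightarrow> real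
                     \<Rightarrow> real^'n^'n" where
  "gmm_W P beta C s2 = (1 / real CARD('p)) *\<^sub>R
     (\<Sum>i\<in>UNIV. transpose (P i) ** gmm_filter (beta i) C s2 ** P i)"

end

theory Submission
  imports Defs
begin

text \<open>
  Write \<open>A \<preceq> B\<close> for the Loewner order. Since \<open>C\<close> commutes with \<open>C + \<sigma>\<^sup>2I\<close>, each Wiener filter
  \<open>C(C + \<sigma>\<^sup>2I)\<^sup>-\<^sup>1\<close> is symmetric with \<open>0 \<preceq> C(C + \<sigma>\<^sup>2I)\<^sup>-\<^sup>1 \<preceq> I\<close>: in the variable \<open>y = (C + \<sigma>\<^sup>2I)\<^sup>-\<^sup>1x\<close>
  both \<open>x\<^sup>TC(C + \<sigma>\<^sup>2I)\<^sup>-\<^sup>1x\<close> and \<open>x\<^sup>Tx - x\<^sup>TC(C + \<sigma>\<^sup>2I)\<^sup>-\<^sup>1x\<close> are sums of nonnegative terms.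
  Convex combinations preserve \<open>0 \<preceq> F \<preceq> I\<close>, hence so do the \<open>F\<^sub>i\<close>.
  Finally \<open>x\<^sup>TWx = (1/n\<^sub>p) \<Sum>\<^sub>i (P\<^sub>ix)\<^sup>TF\<^sub>i(P\<^sub>ix)\<close> lies between \<open>0\<close> and
  \<open>(1/n\<^sub>p) \<Sum>\<^sub>i |P\<^sub>ix|\<^sup>2 = |x|\<^sup>2\<close> by the covering identity, which bounds every eigenvalue of \<open>W\<close> by \<open>1\<close>.
  The covering identity is the only property of the patch matrices that is used.
\<close>

lemma transpose_matrix_add:
  "transpose (A + B) = transpose A + (transpose B :: 'a::comm_semiring_1^'n^'m)"
  by (simp add: transpose_def vec_eq_iff)

lemma transpose_matrix_sum:
  "transpose (sum A S) = (\<Sum>i\<in>S. transpose (A i :: 'a::comm_semiring_1^'n^'m))"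
  by (induction S rule: infinite_finite_induct)
    (auto simp: transpose_matrix_add transpose_def vec_eq_iff)

lemma matrix_vector_mult_sum_left:
  "sum A S *v x = (\<Sum>i\<in>S. (A i :: 'a::comm_semiring_1^'n^'m) *v x)"
  by (induction S rule: infinite_finite_induct) (auto simp: matrix_vector_mult_add_rdistrib)

lemma matrix_mul_add_rdistrib: "(A + B) ** C = A ** C + B ** (C :: 'a::semiring_1^_^_)"
  by (vector matrix_matrix_mult_def sum.distrib[symmetric] field_simps)

lemma inner_transpose_matrix_vector: "(x::real^'n) \<bullet> (transpose P *v z) = (P *v x) \<bullet> z"
  by (metis dot_lmul_matrix inner_commute transpose_matrix_vector)

lemma inner_congruence_matrix_vector:
  "(x::real^'n) \<bullet> ((transpose P ** F ** P) *v x) = (P *v x) \<bullet> (F *v (P *v x))"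
  by (simp only: matrix_vector_mul_assoc[symmetric] matrix_mul_assoc inner_transpose_matrix_vector)

lemma matrix_inv_works:
  assumes "invertible A"
  shows "A ** matrix_inv A = mat 1" "matrix_inv A ** A = mat 1"
  using someI_ex[OF assms[unfolded invertible_def]] unfolding matrix_inv_def by blast+

lemma symmetric_matrix_inv:
  fixes A :: "real^'n^'n"
  assumes "invertible A" and "transpose A = A"
  shows "transpose (matrix_inv A) = matrix_inv A"
proof -
  have "transpose (matrix_inv A) ** A = mat 1"
    by (metis assms matrix_inv_works(1) matrix_transpose_mul transpose_mat)
  then show ?thesis
    by (metis assms(1) matrix_inv_works(1) matrix_mul_assoc matrix_mul_lid matrix_mul_rid)
qed

lemma matrix_inv_commute:
  fixes A C :: "real^'n^'n"
  assumes "invertible A" and "A ** C = C ** A"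
  shows "matrix_inv A ** C = C ** matrix_inv A"
proof -
  let ?B = "matrix_inv A"
  have "?B ** C = ?B ** C ** (A ** ?B)" by (simp add: matrix_inv_works assms(1))
  also have "\<dots> = (?B ** A) ** C ** ?B" by (metis assms(2) matrix_mul_assoc)
  also have "\<dots> = C ** ?B" by (simp add: matrix_inv_works assms(1))
  finally show ?thesis .
qed

definition psd_contraction :: "real^'n^'n \<Rightarrow> bool" where
  "psd_contraction A \<longleftrightarrow> psd_matrix A \<and> (\<forall>x. x \<bullet> (A *v x) \<le> x \<bullet> x)"

lemma invertible_psd_plus_scaled_id:
  fixes C :: "real^'n^'n"
  assumes "psd_matrix C" and "s > 0"
  shows "invertible (C + s *\<^sub>R mat 1)"
proof -
  have "y = 0" if "(C + s *\<^sub>R mat 1) *v y = 0" for y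
  proof -
    have "y \<bullet> (C *v y) + s * (y \<bullet> y) = 0"
      using that by (metis inner_add_right inner_scaleR_right inner_zero_right
          matrix_vector_mul_lid matrix_vector_mult_add_rdistrib scaleR_matrix_vector_assoc)
    moreover have "0 \<le> y \<bullet> (C *v y)" using assms(1) unfolding psd_matrix_def by blast
    ultimately have "y \<bullet> y \<le> 0" using assms(2) by (smt (verit) mult_pos_pos inner_ge_zero)
    then show "y = 0" by (meson inner_gt_zero_iff not_le)
  qed
  then obtain B where "B ** (C + s *\<^sub>R mat 1) = mat 1"
    using matrix_left_invertible_ker by blast
  then show ?thesis
    using matrix_left_right_inverse unfolding invertible_def by blast
qed

lemma psd_contraction_wiener_filter:
  fixes C :: "real^'n^'n"
  assumes psd: "psd_matrix C" and s: "s > 0"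
  shows "psd_contraction (C ** matrix_inv (C + s *\<^sub>R mat 1))"
proof -
  define A where "A = C + s *\<^sub>R mat 1"
  define B where "B = matrix_inv A"
  have CT: "transpose C = C" and C_nonneg: "\<And>y. 0 \<le> y \<bullet> (C *v y)"
    using psd unfolding psd_matrix_def by auto
  have A_inv: "invertible A" unfolding A_def by (rule invertible_psd_plus_scaled_id[OF psd s])
  have A_apply: "A *v y = C *v y + s *\<^sub>R y" for y
    unfolding A_def by (simp add: matrix_vector_mult_add_rdistrib scaleR_matrix_vector_assoc[symmetric])
  have "A ** C = C ** A"
    unfolding A_def by (simp add: matrix_add_ldistrib matrix_mul_add_rdistrib
        matrix_scalar_ac scalar_matrix_assoc[symmetric])
  then have "B ** C = C ** B" unfolding B_def by (rule matrix_inv_commute[OF A_inv])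
  moreover have "transpose B = B"
    unfolding B_def by (rule symmetric_matrix_inv[OF A_inv])
      (simp add: A_def transpose_matrix_add CT transpose_scalar)
  ultimately have sym: "transpose (C ** B) = C ** B"
    by (simp add: matrix_transpose_mul CT)
  have "0 \<le> x \<bullet> ((C ** B) *v x) \<and> x \<bullet> ((C ** B) *v x) \<le> x \<bullet> x" for x
  proof -
    define y where "y = B *v x"
    have x: "x = A *v y"
      unfolding y_def B_def by (simp add: matrix_vector_mul_assoc matrix_inv_works[OF A_inv])
    have CBx: "(C ** B) *v x = C *v y"
      unfolding y_def by (simp add: matrix_vector_mul_assoc)
    have lower: "x \<bullet> ((C ** B) *v x) = (C *v y) \<bullet> (C *v y) + s * (y \<bullet> (C *v y))"
      unfolding CBx by (subst x) (simp add: A_apply inner_add_left)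
    have gap: "x \<bullet> x - x \<bullet> ((C ** B) *v x) = s * (y \<bullet> (C *v y)) + s * s * (y \<bullet> y)"
      unfolding lower by (subst (1 2) x)
        (simp add: A_apply inner_add_left inner_add_right inner_commute algebra_simps)
    have "0 \<le> s * (y \<bullet> (C *v y))" "0 \<le> s * s * (y \<bullet> y)"
      using C_nonneg[of y] s by simp_all
    then show ?thesis
      using lower gap inner_ge_zero[of "C *v y"] by linarith
  qed
  with sym show ?thesis
    unfolding psd_contraction_def psd_matrix_def A_def B_def by blast
qed

lemma psd_contraction_convex_sum:
  fixes A :: "'k \<Rightarrow> real^'n^'n"
  assumes "finite S" and "\<And>j. j \<in> S \<Longrightarrow> psd_contraction (A j)"
    and "\<And>j. j \<in> S \<Longrightarrow> b j \<ge> 0" and "(\<Sum>j\<in>S. b j) = 1"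
  shows "psd_contraction (\<Sum>j\<in>S. b j *\<^sub>R A j)"
proof -
  have quad: "x \<bullet> ((\<Sum>j\<in>S. b j *\<^sub>R A j) *v x) = (\<Sum>j\<in>S. b j * (x \<bullet> (A j *v x)))" for x
    by (simp add: matrix_vector_mult_sum_left inner_sum_right scaleR_matrix_vector_assoc[symmetric])
  have "transpose (\<Sum>j\<in>S. b j *\<^sub>R A j) = (\<Sum>j\<in>S. b j *\<^sub>R A j)"
    using assms(2) by (simp add: transpose_matrix_sum transpose_scalar psd_contraction_def psd_matrix_def)
  moreover have "0 \<le> x \<bullet> ((\<Sum>j\<in>S. b j *\<^sub>R A j) *v x)" for x
    unfolding quad using assms(2,3)
    by (intro sum_nonneg mult_nonneg_nonneg) (auto simp: psd_contraction_def psd_matrix_def)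
  moreover have "x \<bullet> ((\<Sum>j\<in>S. b j *\<^sub>R A j) *v x) \<le> x \<bullet> x" for x
  proof -
    have "(\<Sum>j\<in>S. b j * (x \<bullet> (A j *v x))) \<le> (\<Sum>j\<in>S. b j * (x \<bullet> x))"
      using assms(2,3) by (intro sum_mono mult_left_mono) (auto simp: psd_contraction_def)
    also have "\<dots> = x \<bullet> x" using assms(4) by (simp add: sum_distrib_right[symmetric])
    finally show ?thesis unfolding quad .
  qed
  ultimately show ?thesis unfolding psd_contraction_def psd_matrix_def by blast
qed

lemma psd_contraction_patch_average:
  fixes P :: "'i::finite \<Rightarrow> real^'n^'p" and F :: "'i \<Rightarrow> real^'p^'p"
  assumes cover: "(\<Sum>i\<in>UNIV. transpose (P i) ** P i) = c *\<^sub>R mat 1" and c: "c > 0"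
    and F: "\<And>i. psd_contraction (F i)"
  shows "psd_contraction ((1 / c) *\<^sub>R (\<Sum>i\<in>UNIV. transpose (P i) ** F i ** P i))"
    (is "psd_contraction ?W")
proof -
  have quad: "x \<bullet> (?W *v x) = (1 / c) * (\<Sum>i\<in>UNIV. (P i *v x) \<bullet> (F i *v (P i *v x)))" for x
    by (simp only: scaleR_matrix_vector_assoc[symmetric] matrix_vector_mult_sum_left
        inner_sum_right inner_scaleR_right inner_congruence_matrix_vector)
  have norms: "(\<Sum>i\<in>UNIV. (P i *v x) \<bullet> (P i *v x)) = c * (x \<bullet> x)" for x
  proof -
    have "(\<Sum>i\<in>UNIV. (P i *v x) \<bullet> (P i *v x)) = x \<bullet> ((\<Sum>i\<in>UNIV. transpose (P i) ** P i) *v x)"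
      by (simp only: matrix_vector_mult_sum_left inner_sum_right matrix_vector_mul_assoc[symmetric]
          inner_transpose_matrix_vector)
    also have "\<dots> = c * (x \<bullet> x)"
      unfolding cover by (simp add: scaleR_matrix_vector_assoc[symmetric])
    finally show ?thesis .
  qed
  have "transpose (transpose (P i) ** F i ** P i) = transpose (P i) ** F i ** P i" for i
    using F[of i] by (simp add: matrix_transpose_mul matrix_mul_assoc psd_contraction_def psd_matrix_def)
  then have "transpose ?W = ?W"
    by (simp add: transpose_scalar transpose_matrix_sum)
  moreover have "0 \<le> x \<bullet> (?W *v x)" for x
    unfolding quad using c F by (intro mult_nonneg_nonneg sum_nonneg)
      (auto simp: psd_contraction_def psd_matrix_def)
  moreover have "x \<bullet> (?W *v x) \<le> x \<bullet> x" for x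
  proof -
    have "(\<Sum>i\<in>UNIV. (P i *v x) \<bullet> (F i *v (P i *v x))) \<le> c * (x \<bullet> x)"
      unfolding norms[symmetric] using F by (intro sum_mono) (auto simp: psd_contraction_def)
    then show ?thesis unfolding quad using c by (simp add: field_simps)
  qed
  ultimately show ?thesis unfolding psd_contraction_def psd_matrix_def by blast
qed

lemma eigenvalue_le_one_if_psd_contraction:
  assumes "psd_contraction A" and "is_eigenvalue A l"
  shows "l \<le> 1"
proof -
  obtain v where v: "v \<noteq> 0" "A *v v = l *\<^sub>R v"
    using assms(2) unfolding is_eigenvalue_def by blast
  have "l * (v \<bullet> v) \<le> 1 * (v \<bullet> v)"
    using assms(1) v(2) unfolding psd_contraction_def by (metis inner_scaleR_right mult_1)
  moreover have "v \<bullet> v > 0" using v(1) by simp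
  ultimately show ?thesis by (rule mult_right_le_imp_le)
qed

theorem lemma2:
  fixes P :: "'i::finite \<Rightarrow> real^'n::finite^'p::finite"
    and C :: "'k::finite \<Rightarrow> real^'p^'p"
    and beta :: "'i \<Rightarrow> 'k \<Rightarrow> real"
    and sigma2 :: real
  assumes extr: "\<And>i. extraction_matrix (P i)"
    and cover: "(\<Sum>i\<in>UNIV. transpose (P i) ** P i) = real CARD('p) *\<^sub>R mat 1"
    and C_psd: "\<And>j. psd_matrix (C j)"
    and sigma_pos: "sigma2 > 0"
    and beta_nonneg: "\<And>i j. beta i j \<ge> 0"
    and beta_sum: "\<And>i. (\<Sum>j\<in>UNIV. beta i j) = 1"
  shows "transpose (gmm_W P beta C sigma2) = gmm_W P beta C sigma2
       \<and> psd_matrix (gmm_W P beta C sigma2)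
       \<and> (\<forall>l. is_eigenvalue (gmm_W P beta C sigma2) l \<longrightarrow> l \<le> 1)"
proof -
  have "psd_contraction (gmm_filter (beta i) C sigma2)" for i
    unfolding gmm_filter_def
    using psd_contraction_wiener_filter[OF C_psd sigma_pos] beta_nonneg beta_sum
    by (intro psd_contraction_convex_sum) auto
  then have "psd_contraction (gmm_W P beta C sigma2)"
    unfolding gmm_W_def by (intro psd_contraction_patch_average[OF cover]) simp_all
  then show ?thesis
    using eigenvalue_le_one_if_psd_contraction
    unfolding psd_contraction_def psd_matrix_def by blast
qed

end
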